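(* Let $2\le d\le D$ be integers and let $g:(1,\infty)\to(0,\infty)$ be non-decreasing with $$d\,g(x)\le g\!\left(\tfrac{d^2}{d-1}x\right)\quad\text{and}\quad g\!\left(\tfrac{D^2}{D-1}x\right)\le D\,g(x)\quad\text{for all }x.$$ Then there exist a sequence $\bar d\in\{d,D\}^{\mathbb N}$ and a constant $C\ge1$ such that $\frac1C g(x)\le h_{\bar d}(x)\le C g(x)$ for all $x>1$.
   Context: For a sequence $\bar d=(d_i)_{i\ge0}$ of integers $\ge2$, $p_i=\frac{d_i-1}{d_i^2}$. For real $x>1$, $k(x)$ is the unique integer $k\ge0$ with $\frac{1}{p_0\cdots p_{k}}\ge x>\frac{1}{p_0\cdots p_{k-1}}$ (empty product $=1$), and $h_{\bar d}(x)=d_0d_1\cdots d_{k(x)}$. *)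

theory Defs
  imports Complex_Main
begin

definition pseq :: "(nat \<Rightarrow> nat) \<Rightarrow> nat \<Rightarrow> real" where
  "pseq dd i = (real (dd i) - 1) / (real (dd i))^2"

definition kidx :: "(nat \<Rightarrow> nat) \<Rightarrow> real \<Rightarrow> nat" where
  "kidx dd x = (THE k. x \<le> 1 / (\<Prod>i\<in>{..k}. pseq dd i) \<and> 1 / (\<Prod>i\<in>{..<k}. pseq dd i) < x)"

definition hseq :: "(nat \<Rightarrow> nat) \<Rightarrow> real \<Rightarrow> real" where
  "hseq dd x = (\<Prod>i\<in>{..kidx dd x}. real (dd i))"

end

theory Submission
  imports Defs
begin

(* Write q(e) = e^2/(e-1) = 1/p for a digit e, and let the thresholds
   T_n = q(d_0)...q(d_{n-1}) = 1/(p_0...p_{n-1}).  Since q >= 4 they increase to infinity,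
   so every x > 1 lies in exactly one bracket T_k < x <= T_(k+1), and there
   h(x) = d_0...d_k.  The sequence is built greedily: with Q_k = T_(k+1) and
   H_k = d_0...d_k, choose the small digit d when g(Q_k) <= H_k and the large digit D
   otherwise.  The growth hypotheses give d g(Q) <= g(q(d) Q) <= g(q(D) Q) <= D g(Q),
   from which one step of the greedy rule preserves a two-sided bound
   a g(Q_k) <= H_k <= b g(Q_k) (greedy_step_bounds, greedy_state_bounds).  Finally, monotonicity of g
   and the upper growth bound transfer a bound at the thresholds to all x
   (lemma comparable_from_thresholds). *)

definition growth_factor :: "nat \<Rightarrow> real" where
  "growth_factor e = (real e)^2 / (real e - 1)"

definition threshold :: "(nat \<Rightarrow> nat) \<Rightarrow> nat \<Rightarrow> real" where
  "threshold dd n = (\<Prod>i<n. growth_factor (dd i))"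

lemma growth_factor_ge_4: "2 \<le> e \<Longrightarrow> growth_factor e \<ge> 4"
proof -
  assume "2 \<le> e"
  hence pos: "real e - 1 > 0" by simp
  have "4 * (real e - 1) \<le> (real e)^2" using sum_squares_ge_zero[of "real e - 2" 0]
    by (simp add: power2_eq_square algebra_simps)
  thus ?thesis using pos unfolding growth_factor_def by (simp add: field_simps)
qed

lemma growth_factor_mono:
  assumes "2 \<le> e" "e \<le> E" shows "growth_factor e \<le> growth_factor E"
proof -
  define x y where "x = real e" and "y = real E"
  have x: "x \<ge> 2" "x \<le> y" using assms unfolding x_def y_def by auto
  have "1 * 1 \<le> (x - 1) * (y - 1)" using x by (intro mult_mono) auto
  hence "x * y \<ge> x + y" by (simp add: algebra_simps)
  hence "(y - x) * (x * y) \<ge> (y - x) * (x + y)" using x by (intro mult_left_mono) auto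
  hence "x^2 * (y - 1) \<le> y^2 * (x - 1)" by (simp add: power2_eq_square algebra_simps)
  hence "x^2 / (x - 1) \<le> y^2 / (y - 1)" using x by (simp add: field_simps)
  thus ?thesis unfolding growth_factor_def x_def y_def .
qed

lemma threshold_eq_inverse_prod:
  assumes "\<forall>i. dd i \<ge> 2"
  shows "1 / (\<Prod>i<n. pseq dd i) = threshold dd n"
proof -
  have "\<And>i. growth_factor (dd i) = 1 / pseq dd i"
    using assms unfolding growth_factor_def pseq_def by simp
  thus ?thesis unfolding threshold_def by (simp add: prod_dividef)
qed

lemma threshold_Suc: "threshold dd (Suc n) = threshold dd n * growth_factor (dd n)"
  unfolding threshold_def by simp

lemma threshold_ge_power: "\<forall>i. dd i \<ge> 2 \<Longrightarrow> threshold dd n \<ge> 4 ^ n"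
proof (induction n)
  case 0 thus ?case by (simp add: threshold_def)
next
  case (Suc n)
  have IH: "4 ^ n \<le> threshold dd n" using Suc by blast
  have "growth_factor (dd n) \<ge> 4" using growth_factor_ge_4 Suc.prems by blast
  hence "4 ^ n * 4 \<le> threshold dd n * growth_factor (dd n)"
    using IH order_trans[OF zero_le_power IH] by (intro mult_mono) auto
  thus ?case unfolding threshold_Suc by (simp add: mult.commute)
qed

lemma threshold_strict_mono:
  assumes "\<forall>i. dd i \<ge> 2" shows "strict_mono (threshold dd)"
unfolding strict_mono_Suc_iff
proof
  fix k
  have "threshold dd k > 0" using threshold_ge_power[OF assms, of k]
    by (smt (verit) zero_less_power)
  moreover have "growth_factor (dd k) \<ge> 4" using growth_factor_ge_4 assms by blast
  ultimately show "threshold dd k < threshold dd (Suc k)"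
    unfolding threshold_Suc by (simp add: mult_less_cancel_left1)
qed

lemma threshold_bracket:
  assumes d2: "\<forall>i. dd i \<ge> 2" and x: "x > 1"
  shows "\<exists>k. threshold dd k < x \<and> x \<le> threshold dd (Suc k)"
proof -
  obtain n where "x < 4 ^ n" using real_arch_pow[of 4 x] by auto
  hence "x \<le> threshold dd n" using threshold_ge_power[OF d2, of n] by simp
  thus ?thesis
  proof (induction n)
    case 0 thus ?case using x by (simp add: threshold_def)
  next
    case (Suc n) thus ?case by (cases "x \<le> threshold dd n") (auto simp: not_le)
  qed
qed

lemma hseq_on_bracket:
  assumes d2: "\<forall>i. dd i \<ge> 2" and k: "threshold dd k < x" "x \<le> threshold dd (Suc k)"
  shows "hseq dd x = (\<Prod>i<Suc k. real (dd i))"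
proof -
  have upper_eq: "\<And>m. 1 / (\<Prod>i\<in>{..m}. pseq dd i) = threshold dd (Suc m)"
    using threshold_eq_inverse_prod[OF d2] by (metis lessThan_Suc_atMost)
  have lower_eq: "\<And>m. 1 / (\<Prod>i\<in>{..<m}. pseq dd i) = threshold dd m"
    using threshold_eq_inverse_prod[OF d2] by metis
  have mono: "mono (threshold dd)"
    using threshold_strict_mono[OF d2] by (rule strict_mono_mono)
  have "kidx dd x = k"
    unfolding kidx_def upper_eq lower_eq
  proof (rule the_equality)
    fix m assume m: "x \<le> threshold dd (Suc m) \<and> threshold dd m < x"
    show "m = k"
    proof (rule ccontr)
      assume "m \<noteq> k"
      hence "Suc m \<le> k \<or> Suc k \<le> m" by auto
      thus False using monoD[OF mono, of "Suc m" k] monoD[OF mono, of "Suc k" m] m k by auto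
    qed
  qed (use k in simp)
  thus ?thesis unfolding hseq_def by (simp add: lessThan_Suc_atMost)
qed

text \<open>The greedy construction: state k is the pair (Q_k, H_k) = (T_(k+1), d_0...d_k);
  the next digit is d if g(Q_k) <= H_k and D otherwise.\<close>
primrec greedy_state :: "(real \<Rightarrow> real) \<Rightarrow> nat \<Rightarrow> nat \<Rightarrow> nat \<Rightarrow> real \<times> real" where
  "greedy_state g d D 0 = (growth_factor d, real d)"
| "greedy_state g d D (Suc k) =
     (let (Q, H) = greedy_state g d D k; e = (if g Q \<le> H then d else D)
      in (growth_factor e * Q, real e * H))"

definition greedy_seq :: "(real \<Rightarrow> real) \<Rightarrow> nat \<Rightarrow> nat \<Rightarrow> nat \<Rightarrow> nat" where
  "greedy_seq g d D k = (case k of 0 \<Rightarrow> d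
     | Suc j \<Rightarrow> (let (Q, H) = greedy_state g d D j in if g Q \<le> H then d else D))"

lemma greedy_seq_values: "greedy_seq g d D i \<in> {d, D}"
  unfolding greedy_seq_def by (auto split: nat.split prod.split)

lemma greedy_state_eq:
  "greedy_state g d D k =
     (threshold (greedy_seq g d D) (Suc k), \<Prod>i<Suc k. real (greedy_seq g d D i))"
proof (induction k)
  case 0 thus ?case by (simp add: threshold_def greedy_seq_def)
next
  case (Suc k)
  thus ?case
    by (simp add: threshold_Suc[of _ "Suc k"] greedy_seq_def mult.commute Let_def)
qed

locale growth_bounds =
  fixes d D :: nat and g :: "real \<Rightarrow> real"
  assumes d2: "2 \<le> d" and dD: "d \<le> D"
    and pos: "\<And>x. x > 1 \<Longrightarrow> g x > 0"
    and mono: "\<And>x y. 1 < x \<Longrightarrow> x \<le> y \<Longrightarrow> g x \<le> g y"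
    and lower_growth: "\<And>x. x > 1 \<Longrightarrow> real d * g x \<le> g (growth_factor d * x)"
    and upper_growth: "\<And>x. x > 1 \<Longrightarrow> g (growth_factor D * x) \<le> real D * g x"
begin

lemma growth_sandwich:
  assumes "Q > 1"
  shows "real d * g Q \<le> g (growth_factor d * Q)"
    and "g (growth_factor d * Q) \<le> g (growth_factor D * Q)"
    and "g (growth_factor D * Q) \<le> real D * g Q"
proof -
  have "growth_factor d \<ge> 4" using growth_factor_ge_4 d2 .
  hence "1 < growth_factor d * Q" using assms by (smt (verit) mult_le_cancel_right1)
  moreover have "growth_factor d * Q \<le> growth_factor D * Q"
    using assms growth_factor_mono[OF d2 dD] by (intro mult_right_mono) auto
  ultimately show "g (growth_factor d * Q) \<le> g (growth_factor D * Q)" by (rule mono)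
qed (use assms lower_growth upper_growth in auto)

lemma greedy_step_bounds:
  assumes Q: "Q > 1" and lower: "a * g Q \<le> H" and upper: "H \<le> b * g Q"
    and a: "0 < a" "a \<le> real d / real D" and b: "real D / real d \<le> b"
  defines "e \<equiv> if g Q \<le> H then d else D"
  shows "a * g (growth_factor e * Q) \<le> real e * H \<and> real e * H \<le> b * g (growth_factor e * Q)"
proof -
  have dpos: "real d > 0" and Dpos: "real D > 0" using d2 dD by auto
  have gQ: "g Q > 0" using pos Q .
  have b0: "b \<ge> 0" using b dpos Dpos by (smt (verit) divide_pos_pos)
  note gs = growth_sandwich[OF Q]
  show ?thesis
  proof (cases "g Q \<le> H")
    case True
    hence e: "e = d" unfolding e_def by simp
    have "real d * H \<le> real d * (b * g Q)" using upper dpos by simp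
    also have "\<dots> = b * (real d * g Q)" by simp
    also have "\<dots> \<le> b * g (growth_factor d * Q)" using gs(1) b0 by (rule mult_left_mono)
    finally have up: "real d * H \<le> b * g (growth_factor d * Q)" .
    have "a * g (growth_factor d * Q) \<le> a * (real D * g Q)"
      using gs(2,3) a by (intro mult_left_mono) auto
    also have "\<dots> \<le> (real d / real D) * (real D * g Q)"
      using a gQ Dpos by (intro mult_right_mono) auto
    also have "\<dots> = real d * g Q" using Dpos by simp
    also have "\<dots> \<le> real d * H" using True dpos by simp
    finally show ?thesis using up e by simp
  next
    case False
    hence e: "e = D" unfolding e_def by simp
    have "real D * H \<le> real D * g Q" using False Dpos by simp
    also have "\<dots> = (real D / real d) * (real d * g Q)" using dpos by simp
    also have "\<dots> \<le> b * (real d * g Q)" using b gQ dpos by (intro mult_right_mono) auto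
    also have "\<dots> \<le> b * g (growth_factor D * Q)"
      using gs(1,2) b0 by (intro mult_left_mono) auto
    finally have up: "real D * H \<le> b * g (growth_factor D * Q)" .
    have "a * g (growth_factor D * Q) \<le> a * (real D * g Q)"
      using gs(3) a by (intro mult_left_mono) auto
    also have "\<dots> = real D * (a * g Q)" by simp
    also have "\<dots> \<le> real D * H" using lower Dpos by simp
    finally show ?thesis using up e by simp
  qed
qed

text \<open>For any digit sequence bounded by D, a two-sided bound on d_0...d_k in terms of
  g(T_(k+1)) transfers to all x > 1, at the cost of one factor D in the constant.\<close>
lemma comparable_from_thresholds:
  assumes digits: "\<forall>i. 2 \<le> dd i \<and> dd i \<le> D" and a: "a > 0" and b: "b \<ge> 0"
    and bounds: "\<And>k. a * g (threshold dd (Suc k)) \<le> (\<Prod>i<Suc k. real (dd i))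
                   \<and> (\<Prod>i<Suc k. real (dd i)) \<le> b * g (threshold dd (Suc k))"
  shows "\<exists>C\<ge>1. \<forall>x>1. g x / C \<le> hseq dd x \<and> hseq dd x \<le> C * g x"
proof (intro exI[of _ "max 1 (max (b * real D) (1 / a))"] conjI allI impI)
  define C where "C = max 1 (max (b * real D) (1 / a))"
  fix x :: real assume x: "x > 1"
  have d2: "\<forall>i. dd i \<ge> 2" using digits by blast
  obtain k where k: "threshold dd k < x" "x \<le> threshold dd (Suc k)"
    using threshold_bracket[OF d2 x] by blast
  define T where "T = threshold dd (Suc k)"
  have h: "hseq dd x = (\<Prod>i<Suc k. real (dd i))" using hseq_on_bracket[OF d2 k] .
  have T1: "T > 1" using x k unfolding T_def by linarith
  have gx: "g x > 0" using pos x .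
  have gxT: "g x \<le> g T" using mono x k unfolding T_def by blast
  have "T = threshold dd k * growth_factor (dd k)" unfolding T_def threshold_Suc ..
  also have "\<dots> \<le> x * growth_factor D"
    using k digits growth_factor_mono[of "dd k" D] growth_factor_ge_4[of "dd k"] x
    by (intro mult_mono) auto
  finally have "g T \<le> g (growth_factor D * x)" using T1 mono by (simp add: mult.commute)
  hence gTx: "g T \<le> real D * g x" using upper_growth[OF x] by linarith
  have "g x / C \<le> g x / (1 / a)"
    using gx a unfolding C_def by (intro divide_left_mono) auto
  also have "\<dots> \<le> a * g T" using gxT a by simp
  also have "\<dots> \<le> hseq dd x" using bounds h unfolding T_def by simp
  finally show "g x / C \<le> hseq dd x" .
  have "hseq dd x \<le> b * g T" using bounds h unfolding T_def by simp
  also have "\<dots> \<le> b * (real D * g x)" using gTx b by (rule mult_left_mono)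
  also have "\<dots> \<le> C * g x" unfolding C_def using gx by (simp add: mult_right_mono)
  finally show "hseq dd x \<le> C * g x" .
qed simp

lemma greedy_seq_digits: "\<forall>i. 2 \<le> greedy_seq g d D i \<and> greedy_seq g d D i \<le> D"
  using greedy_seq_values[of g d D] d2 dD by (metis emptyE insertE le_trans order_refl)

lemma greedy_state_bounds:
  assumes a: "0 < a" "a \<le> real d / real D" and b: "real D / real d \<le> b"
    and start: "a * g (growth_factor d) \<le> real d" "real d \<le> b * g (growth_factor d)"
  shows "a * g (fst (greedy_state g d D k)) \<le> snd (greedy_state g d D k)
         \<and> snd (greedy_state g d D k) \<le> b * g (fst (greedy_state g d D k))"
proof (induction k)
  case 0 thus ?case using start by simp
next
  case (Suc k)
  obtain Q H where state: "greedy_state g d D k = (Q, H)" by (cases "greedy_state g d D k")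
  have "(1::real) < 4 ^ Suc k" by (rule one_less_power) auto
  also have "\<dots> \<le> threshold (greedy_seq g d D) (Suc k)"
    using threshold_ge_power greedy_seq_digits by blast
  finally have Q: "Q > 1" using greedy_state_eq[of g d D k] state by simp
  have "a * g Q \<le> H" "H \<le> b * g Q" using Suc state by auto
  from greedy_step_bounds[OF Q this a b] show ?case using state by (simp add: Let_def)
qed

text \<open>With constants chosen around the initial ratio d/g(q(d)), the greedy sequence
  satisfies the threshold bound, hence h is comparable to g.\<close>
lemma greedy_comparable:
  "\<exists>C\<ge>1. \<forall>x>1. g x / C \<le> hseq (greedy_seq g d D) x \<and> hseq (greedy_seq g d D) x \<le> C * g x"
proof -
  define r0 where "r0 = real d / g (growth_factor d)"
  define a where "a = min r0 (real d / real D)"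
  define b where "b = max r0 (real D / real d)"
  have gq: "g (growth_factor d) > 0" using pos growth_factor_ge_4[OF d2] by simp
  have r0: "r0 > 0" "real d = r0 * g (growth_factor d)" unfolding r0_def using gq d2 by auto
  have a: "a > 0" "a \<le> real d / real D" unfolding a_def using r0 d2 dD by auto
  have b: "b \<ge> 0" "real D / real d \<le> b" unfolding b_def using r0 by auto
  have "a * g (growth_factor d) \<le> real d" "real d \<le> b * g (growth_factor d)"
    using r0(2) gq unfolding a_def b_def by (simp_all add: mult_right_mono)
  from greedy_state_bounds[OF a b(2) this]
  have "\<And>k. a * g (threshold (greedy_seq g d D) (Suc k)) \<le> (\<Prod>i<Suc k. real (greedy_seq g d D i))
         \<and> (\<Prod>i<Suc k. real (greedy_seq g d D i)) \<le> b * g (threshold (greedy_seq g d D) (Suc k))"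
    using greedy_state_eq by (metis fst_conv snd_conv)
  from comparable_from_thresholds[OF greedy_seq_digits a(1) b(1) this] show ?thesis .
qed

end

theorem mainTheorem9:
  fixes d D :: nat and g :: "real \<Rightarrow> real"
  assumes "2 \<le> d" and "d \<le> D"
    and "\<And>x. x > 1 \<Longrightarrow> g x > 0"
    and "\<And>x y. 1 < x \<Longrightarrow> x \<le> y \<Longrightarrow> g x \<le> g y"
    and "\<And>x. x > 1 \<Longrightarrow> real d * g x \<le> g ((real d)^2 / (real d - 1) * x)"
    and "\<And>x. x > 1 \<Longrightarrow> g ((real D)^2 / (real D - 1) * x) \<le> real D * g x"
  shows "\<exists>dd :: nat \<Rightarrow> nat. (\<forall>i. dd i \<in> {d, D}) \<and>
           (\<exists>C::real. C \<ge> 1 \<and> (\<forall>x>1. g x / C \<le> hseq dd x \<and> hseq dd x \<le> C * g x))"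
proof -
  interpret growth_bounds d D g
    using assms by unfold_locales (simp_all add: growth_factor_def)
  show ?thesis
    using greedy_seq_values[of g d D] greedy_comparable by blast
qed

end
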